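(* Let $d,h$ be positive integers, $W_{\mathrm{in}} \in \mathbb{R}^{h\times d}$, $b_{\mathrm{in}}\in\mathbb{R}^h$, $W_{\mathrm{out}}\in\mathbb{R}^{d\times h}$, $b_{\mathrm{out}}\in\mathbb{R}^d$, and consider the residual block $f(x) = x + r(x)$ with $r(x) = W_{\mathrm{out}}\,\mathrm{ReLU}(W_{\mathrm{in}}x + b_{\mathrm{in}}) + b_{\mathrm{out}}$, $x\in\mathbb{R}^d$. Let $x$ be a random vector in $\mathbb{R}^d$ drawn from a data distribution, and define the ReLU gating matrix $D(x) = \mathrm{diag}\big(\mathbf{1}[W_{\mathrm{in}}x + b_{\mathrm{in}} > 0]\big)\in\{0,1\}^{h\times h}$ (indicator taken entrywise), together with the Jacobians $J_r(x) = W_{\mathrm{out}}D(x)W_{\mathrm{in}}$ and $J_f(x) = I_d + J_r(x)$. Suppose that (i) the block satisfies dynamic isometry in expectation, $\mathbb{E}_x[J_f(x)^\top J_f(x)] = I_d$; (ii) the residual is non-trivial, i.e. $J_r(x)\neq 0$ (so that $\mathbb{E}_x[\|J_r(x)\|_F^2]>0$); and (iii) each ReLU unit is active with probability $\tfrac12$, i.e. $\mathbb{E}_x[D(x)] = \tfrac12 I_h$. Then $\mathrm{tr}(W_{\mathrm{out}}W_{\mathrm{in}}) < 0$.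
   Context: $\mathrm{ReLU}$ is applied entrywise, $\mathrm{ReLU}(t)=\max(t,0)$. $\|\cdot\|_F$ denotes the Frobenius norm and $\mathrm{tr}$ the trace. Expectations $\mathbb{E}_x$ are over the data distribution of $x$ (assumed such that the expectations exist). *)

theory Defs
  imports "HOL-Analysis.Analysis" "HOL-Probability.Probability"
begin

text \<open>Matrices in R^(m x n) are rendered as real^'n^'m (rows indexed by 'm).
  Hidden dimension h is CARD('h), input dimension d is CARD('d).\<close>

definition relu_vec :: "real^'n \<Rightarrow> real^'n" where
  "relu_vec v = (\<chi> i. max (v $ i) 0)"

definition res_branch :: "real^'d^'h \<Rightarrow> real^'h \<Rightarrow> real^'h^'d \<Rightarrow> real^'d \<Rightarrow> real^'d \<Rightarrow> real^'d" where
  "res_branch Win bin Wout bout x = Wout *v relu_vec (Win *v x + bin) + bout"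

definition res_block :: "real^'d^'h \<Rightarrow> real^'h \<Rightarrow> real^'h^'d \<Rightarrow> real^'d \<Rightarrow> real^'d \<Rightarrow> real^'d" where
  "res_block Win bin Wout bout x = x + res_branch Win bin Wout bout x"

definition gate :: "real^'d^'h \<Rightarrow> real^'h \<Rightarrow> real^'d \<Rightarrow> real^'h^'h" where
  "gate Win bin x = (\<chi> i j. if i = j \<and> (Win *v x + bin) $ i > 0 then 1 else 0)"

definition jac_r :: "real^'d^'h \<Rightarrow> real^'h \<Rightarrow> real^'h^'d \<Rightarrow> real^'d \<Rightarrow> real^'d^'d" where
  "jac_r Win bin Wout x = Wout ** gate Win bin x ** Win"

definition jac_f :: "real^'d^'h \<Rightarrow> real^'h \<Rightarrow> real^'h^'d \<Rightarrow> real^'d \<Rightarrow> real^'d^'d" where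
  "jac_f Win bin Wout x = mat 1 + jac_r Win bin Wout x"

definition frob_norm :: "real^'n^'m \<Rightarrow> real" where
  "frob_norm A = sqrt (\<Sum>i\<in>UNIV. \<Sum>j\<in>UNIV. (A $ i $ j)^2)"

end

(* Taking the trace of the isometry condition and expanding
   tr ((I + B)^T (I + B)) = d + 2 tr B + |B|_F^2 gives 2 E[tr J_r] + E[|J_r|_F^2] = 0.
   By linearity, E[tr J_r] = tr (W_in W_out E[D]) = tr (W_out W_in) / 2, hence
   tr (W_out W_in) = - E[|J_r|_F^2] < 0.  All expectations exist because D(x) takes
   only finitely many values. *)

theory Submission
  imports Defs
begin

lemma transpose_add: "transpose (A + B) = transpose A + (transpose B :: 'a::semiring_1^'m^'n)"
  by (simp add: transpose_def vec_eq_iff)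

lemma trace_transpose: "trace (transpose A) = trace (A :: 'a::semiring_1^'n^'n)"
  by (simp add: trace_def transpose_def)

lemma matrix_add_rdistrib: "(A + B) ** C = A ** C + B ** (C :: 'a::semiring_1^'p^'n)"
  by (simp add: matrix_matrix_mult_def vec_eq_iff sum.distrib distrib_right)

lemma trace_scaleR: "trace (c *\<^sub>R A) = c * trace (A :: real^'n^'n)"
  by (simp add: trace_def sum_distrib_left)

lemma bounded_linear_trace_mult_left:
  fixes C :: "real^'m^'n"
  shows "bounded_linear (\<lambda>A :: real^'n^'m. trace (C ** A))"
  unfolding linear_conv_bounded_linear[symmetric]
  by (intro linearI)
    (simp_all add: matrix_add_ldistrib trace_add trace_scaleR matrix_scalar_ac
      scalar_matrix_assoc[symmetric])

lemma integral_trace_mult_left: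
  fixes f :: "'a \<Rightarrow> real^'n^'m" and C :: "real^'m^'n"
  assumes "integrable M f"
  shows "(\<integral>x. trace (C ** f x) \<partial>M) = trace (C ** (\<integral>x. f x \<partial>M))"
  using integral_bounded_linear[OF bounded_linear_trace_mult_left assms] .

lemma integral_trace:
  fixes f :: "'a \<Rightarrow> real^'n^'n"
  assumes "integrable M f"
  shows "(\<integral>x. trace (f x) \<partial>M) = trace (\<integral>x. f x \<partial>M)"
  using integral_trace_mult_left[OF assms, of "mat 1"] by simp

lemma trace_transpose_mult_self: "trace (transpose A ** A) = (frob_norm (A :: real^'n^'m))^2"
proof -
  have "trace (transpose A ** A) = (\<Sum>j\<in>UNIV. \<Sum>i\<in>UNIV. (A $ i $ j)^2)"
    by (simp add: trace_def matrix_matrix_mult_def transpose_def power2_eq_square)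
  also have "\<dots> = (\<Sum>i\<in>UNIV. \<Sum>j\<in>UNIV. (A $ i $ j)^2)"
    by (rule sum.swap)
  finally show ?thesis
    by (simp add: frob_norm_def sum_nonneg)
qed

lemma trace_transpose_mult_self_id_plus:
  fixes B :: "real^'n^'n"
  shows "trace (transpose (mat 1 + B) ** (mat 1 + B)) = real CARD('n) + 2 * trace B + (frob_norm B)^2"
  by (simp add: transpose_add matrix_add_ldistrib matrix_add_rdistrib trace_add trace_I
      trace_transpose trace_transpose_mult_self)

lemma (in finite_measure) integrable_comp_finite_valued:
  fixes g :: "'a \<Rightarrow> 'c::finite" and F :: "'c \<Rightarrow> 'b::{banach, second_countable_topology}"
  assumes "g \<in> M \<rightarrow>\<^sub>M count_space UNIV"
  shows "integrable M (\<lambda>x. F (g x))"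
proof (rule integrable_const_bound)
  show "AE x in M. norm (F (g x)) \<le> Max (range (\<lambda>c. norm (F c)))"
    by (intro AE_I2 Max_ge) auto
  show "(\<lambda>x. F (g x)) \<in> borel_measurable M"
    using assms by (rule measurable_compose) simp
qed

definition active_units :: "real^'d^'h \<Rightarrow> real^'h \<Rightarrow> real^'d \<Rightarrow> 'h set" where
  "active_units Win bin x = {i. (Win *v x + bin) $ i > 0}"

definition diag_indicator :: "'n set \<Rightarrow> real^'n^'n" where
  "diag_indicator S = (\<chi> i j. if i = j \<and> i \<in> S then 1 else 0)"

lemma gate_eq_diag_indicator: "gate Win bin x = diag_indicator (active_units Win bin x)"
  by (simp add: gate_def diag_indicator_def active_units_def)

lemma active_units_measurable:
  fixes Win :: "real^'d^'h" and bin :: "real^'h"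
  shows "active_units Win bin \<in> borel \<rightarrow>\<^sub>M count_space UNIV"
proof (subst measurable_count_space_eq2, simp_all, intro allI)
  fix S :: "'h set"
  have [measurable]: "(\<lambda>x. (Win *v x + bin) $ i) \<in> borel_measurable borel" for i
    by (intro borel_measurable_continuous_onI continuous_intros)
  have "active_units Win bin -` {S} = {x. \<forall>i. i \<in> S \<longleftrightarrow> (Win *v x + bin) $ i > 0}"
    by (auto simp: active_units_def)
  also have "\<dots> \<in> sets borel"
    by measurable
  finally show "active_units Win bin -` {S} \<in> sets borel" .
qed

lemma integrable_comp_gate:
  fixes F :: "real^'h^'h \<Rightarrow> 'b::{banach, second_countable_topology}"
  assumes "finite_measure M" and "sets M = sets borel"
  shows "integrable M (\<lambda>x. F (gate Win bin x))"
proof -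
  have "active_units Win bin \<in> M \<rightarrow>\<^sub>M count_space UNIV"
    using active_units_measurable measurable_cong_sets[OF assms(2) refl] by blast
  then show ?thesis
    unfolding gate_eq_diag_indicator
    by (rule finite_measure.integrable_comp_finite_valued[OF assms(1)])
qed

lemma trace_jac_r: "trace (jac_r Win bin Wout x) = trace ((Win ** Wout) ** gate Win bin x)"
  by (simp add: jac_r_def trace_mul_sym[of _ Win] matrix_mul_assoc)

theorem proposition1:
  fixes M :: "(real^'d) measure"
    and Win :: "real^'d^'h" and bin :: "real^'h"
    and Wout :: "real^'h^'d" and bout :: "real^'d"
  assumes "prob_space M"
    and "sets M = sets borel"
    and iso: "(\<integral>x. transpose (jac_f Win bin Wout x) ** jac_f Win bin Wout x \<partial>M) = mat 1"
    and nontriv: "(\<integral>x. (frob_norm (jac_r Win bin Wout x))^2 \<partial>M) > 0"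
    and half: "(\<integral>x. gate Win bin x \<partial>M) = (1/2) *\<^sub>R mat 1"
  shows "trace (Wout ** Win) < 0"
proof -
  interpret prob_space M by fact
  note integrable = integrable_comp_gate[OF finite_measure_axioms assms(2)]
  let ?J = "jac_r Win bin Wout"
  have mean_trace: "(\<integral>x. trace (?J x) \<partial>M) = trace (Wout ** Win) / 2"
  proof -
    have "(\<integral>x. trace (?J x) \<partial>M) = trace ((Win ** Wout) ** (\<integral>x. gate Win bin x \<partial>M))"
      unfolding trace_jac_r by (rule integral_trace_mult_left[OF integrable])
    then show ?thesis
      using half by (simp add: matrix_scalar_ac trace_scaleR trace_mul_sym[of Win])
  qed
  have "real CARD('d) = trace (\<integral>x. transpose (jac_f Win bin Wout x) ** jac_f Win bin Wout x \<partial>M)"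
    using iso by (simp add: trace_I)
  also have "\<dots> = (\<integral>x. trace (transpose (jac_f Win bin Wout x) ** jac_f Win bin Wout x) \<partial>M)"
    unfolding jac_f_def jac_r_def by (rule integral_trace[symmetric, OF integrable])
  also have "\<dots> = (\<integral>x. real CARD('d) + 2 * trace (?J x) + (frob_norm (?J x))^2 \<partial>M)"
    by (simp add: jac_f_def trace_transpose_mult_self_id_plus)
  also have "\<dots> = real CARD('d) + 2 * (\<integral>x. trace (?J x) \<partial>M) + (\<integral>x. (frob_norm (?J x))^2 \<partial>M)"
    using integrable[of "\<lambda>D. trace (Wout ** D ** Win)"]
      integrable[of "\<lambda>D. (frob_norm (Wout ** D ** Win))^2"]
    by (simp add: jac_r_def Bochner_Integration.integral_add prob_space)
  finally show ?thesis
    using mean_trace nontriv by linarith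
qed

end
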